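(* Let $D$ be a reduced knot diagram, let $2\le k\le\infty$, and let $\boldsymbol\ell$ be a null pattern of the game matrix $M$ of some version of the $k$-color region select game on $D$. Then there exists $s\in\mathbb{Z}_k$ such that $\sigma_{\boldsymbol\ell}(e)\in\{s,-s\}$ for every edge $e$ of $D$. Moreover, let $e_1,e_2$ be any two edges that meet at a common vertex and are not incident to a common region. Then $\sigma_{\boldsymbol\ell}(e_1)=s$ if and only if $\sigma_{\boldsymbol\ell}(e_2)=-s$.
   Context: Diagrams: a link (knot) diagram $D$ is the underlying graph of a regular projection of a link (knot) into $S^2$. Its vertices are the crossings, each of valence 4, and over/under information is ignored. Components without crossings are closed loops, each regarded as one edge with no vertices. Regions of $D$ are the connected components of $S^2\setminus D$. A vertex or edge is incident to a region if it lies in the boundary of that region. Two regions are adjacent if they are incident to a common edge. A vertex $v$ is reducible if some circle in $S^2$ meets $D$ transversely only at $v$, and irreducible otherwise. An irreducible vertex is incident to four distinct regions. A reducible vertex $v$ is incident to exactly three regions $r_0,r_1,r_2$, where $r_0$ touches $v$ from two sides and $r_1,r_2$ touch it from one side. A knot diagram with $n$ vertices has $n+2$ regions. A knot diagram is reduced if all its vertices are irreducible. Ring: for an integer $k\ge2$ let $\mathbb{Z}_k=\mathbb{Z}/k\mathbb{Z}$, and for $k=\infty$ let $\mathbb{Z}_\infty=\mathbb{Z}$. Game versions: a version of the $k$-color region select game on $D$ is a choice of an increment number $a(v,r)\in\mathbb{Z}_k$ for every incident vertex–region pair, subject to the following rules. - If $k<\infty$ and $v$ is irreducible, then $a(v,r)=a_v$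 is the same for all regions $r$ incident to $v$, and $a_v$ is not a zero divisor of $\mathbb{Z}_k$. - If $k<\infty$ and $v$ is reducible, then $a(v,r_0)$ is arbitrary, while $a(v,r_1)$ and $a(v,r_2)$ are not zero divisors. - If $k=\infty$, then $a(v,r)=1$, except that $a(v,r_0)\in\mathbb{Z}$ is arbitrary when $v$ is reducible. - The original game is the version in which all increment numbers equal $1$. Game matrix: enumerate the vertices as $v_1,\dots,v_n$ and the regions as $r_1,\dots,r_m$. The game matrix is the $n\times m$ matrix $M$ over $\mathbb{Z}_k$ with $M_{ij}=a(v_i,r_j)$ if $v_i$ is incident to $r_j$, and $M_{ij}=0$ otherwise. Patterns and configurations: a push pattern is a vector $\mathbf p\in\mathbb{Z}_k^m$, and $\mathbf p(r_j)=p_j$ is the number of times $r_j$ is pushed. A region $r$ is not pushed in $\mathbf p$ if $\mathbf p(r)=0$. A color configuration is a vector $\mathbf c\in\mathbb{Z}_k^n$. Applying $\mathbf p$ to $\mathbf c$ yields $\mathbf c+M\mathbf p$. The configuration $\mathbf c$ is solvable if some $\mathbf p$ satisfies $M\mathbf p=-\mathbf c$; such a $\mathbf p$ is a solving pattern for $\mathbf c$. $D$ is always solvable in the version if every $\mathbf c\in\mathbb{Z}_k^n$ is solvable. A null pattern is an element of $Ker_k(M)=\{\mathbf p\in\mathbb{Z}_k^m: M\mathbf p=0\}$. Push number: for a push pattern $\mathbf p$ and an edge $e$ incident to regions $r,r'$, the push number of $e$ is $\sigma_{\mathbf p}(e)=\mathbf p(r)+\mathbf p(r')\in\mathbb{Z}_k$.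 *)

theory Defs
  imports "HOL-Combinatorics.Permutations" "HOL-Combinatorics.Orbits"
          "HOL-Number_Theory.Cong" "HOL-Library.Extended_Nat"
begin

(* ---------------------------------------------------------------------
   Knot diagrams with at least one crossing, as combinatorial maps
   (rotation systems) on a finite set H of darts (half-edges):
     alpha : fixed-point-free involution pairing the two darts of an edge,
     sigma : counter-clockwise rotation of the darts around their crossing
             (every crossing has valence 4).
   Vertices = sigma-orbits, edges = alpha-orbits {h, alpha h},
   regions  = orbits of (alpha o sigma); dart h stands for the corner of its
   vertex lying between h and sigma h, and that corner belongs to the region
   orbit (alpha o sigma) h.
   Planarity (embedding in S^2) = connectedness + Euler's formula V - E + F = 2.
   Passing straight through a crossing = going to the opposite dart sigma^2;
   the orbits of sigma^2 o alpha are the oriented traversals of the link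
   components, so a knot (one component) has exactly 2 such orbits.
   --------------------------------------------------------------------- *)

definition vertices :: "'d set \<Rightarrow> ('d \<Rightarrow> 'd) \<Rightarrow> 'd set set" where
  "vertices H \<sigma> = (\<lambda>h. orbit \<sigma> h) ` H"

definition edges :: "'d set \<Rightarrow> ('d \<Rightarrow> 'd) \<Rightarrow> 'd set set" where
  "edges H \<alpha> = (\<lambda>h. {h, \<alpha> h}) ` H"

definition face :: "('d \<Rightarrow> 'd) \<Rightarrow> ('d \<Rightarrow> 'd) \<Rightarrow> 'd \<Rightarrow> 'd set" where
  "face \<alpha> \<sigma> h = orbit (\<alpha> \<circ> \<sigma>) h"

definition regions :: "'d set \<Rightarrow> ('d \<Rightarrow> 'd) \<Rightarrow> ('d \<Rightarrow> 'd) \<Rightarrow> 'd set set" where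
  "regions H \<alpha> \<sigma> = face \<alpha> \<sigma> ` H"

definition strands :: "'d set \<Rightarrow> ('d \<Rightarrow> 'd) \<Rightarrow> ('d \<Rightarrow> 'd) \<Rightarrow> 'd set set" where
  "strands H \<alpha> \<sigma> = (\<lambda>h. orbit (\<sigma> \<circ> \<sigma> \<circ> \<alpha>) h) ` H"

definition knot_diagram :: "'d set \<Rightarrow> ('d \<Rightarrow> 'd) \<Rightarrow> ('d \<Rightarrow> 'd) \<Rightarrow> bool" where
  "knot_diagram H \<alpha> \<sigma> \<longleftrightarrow>
     finite H \<and> H \<noteq> {} \<and> \<alpha> permutes H \<and> \<sigma> permutes H \<and>
     (\<forall>h\<in>H. \<alpha> (\<alpha> h) = h \<and> \<alpha> h \<noteq> h \<and> (\<sigma> ^^ 4) h = h \<and> (\<sigma> ^^ 2) h \<noteq> h) \<and>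
     (\<forall>h\<in>H. \<forall>h'\<in>H. (h, h') \<in> {(x, y). y = \<alpha> x \<or> y = \<sigma> x}\<^sup>*) \<and>
     int (card (vertices H \<sigma>)) - int (card (edges H \<alpha>)) + int (card (regions H \<alpha> \<sigma>)) = 2 \<and>
     card (strands H \<alpha> \<sigma>) = 2"

definition vr_incident :: "'d set \<Rightarrow> 'd set \<Rightarrow> bool" where
  "vr_incident v r \<longleftrightarrow> v \<inter> r \<noteq> {}"

definition vertex_regions :: "'d set \<Rightarrow> ('d \<Rightarrow> 'd) \<Rightarrow> ('d \<Rightarrow> 'd) \<Rightarrow> 'd set \<Rightarrow> 'd set set" where
  "vertex_regions H \<alpha> \<sigma> v = {r \<in> regions H \<alpha> \<sigma>. vr_incident v r}"

definition irreducible_vertex :: "('d \<Rightarrow> 'd) \<Rightarrow> ('d \<Rightarrow> 'd) \<Rightarrow> 'd set \<Rightarrow> bool" where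
  "irreducible_vertex \<alpha> \<sigma> v \<longleftrightarrow> card (face \<alpha> \<sigma> ` v) = 4"

definition reduced :: "'d set \<Rightarrow> ('d \<Rightarrow> 'd) \<Rightarrow> ('d \<Rightarrow> 'd) \<Rightarrow> bool" where
  "reduced H \<alpha> \<sigma> \<longleftrightarrow> (\<forall>v\<in>vertices H \<sigma>. irreducible_vertex \<alpha> \<sigma> v)"

(* the two regions on the two sides of the edge containing dart g are
   face g and face (sigma^-1 g); this is independent of the dart chosen *)
definition edge_regions :: "('d \<Rightarrow> 'd) \<Rightarrow> ('d \<Rightarrow> 'd) \<Rightarrow> 'd set \<Rightarrow> 'd set set" where
  "edge_regions \<alpha> \<sigma> e = face \<alpha> \<sigma> ` e \<union> (\<lambda>g. face \<alpha> \<sigma> (inv \<sigma> g)) ` e"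

(* ---------------- the ring Z_k, k in {2,3,...} \<union> {\<infinity>} ----------------
   Elements of Z_k are represented by integers, equality in Z_k is
   congruence modulo zk k, where zk \<infinity> = 0 (congruence mod 0 is equality). *)
definition zk :: "enat \<Rightarrow> int" where
  "zk k = (case k of enat n \<Rightarrow> int n | \<infinity> \<Rightarrow> 0)"

definition non_zero_divisor :: "int \<Rightarrow> int \<Rightarrow> bool" where
  "non_zero_divisor m a \<longleftrightarrow> (\<forall>b. [a * b = 0] (mod m) \<longrightarrow> [b = 0] (mod m))"

definition corner_count :: "('d \<Rightarrow> 'd) \<Rightarrow> ('d \<Rightarrow> 'd) \<Rightarrow> 'd set \<Rightarrow> 'd set \<Rightarrow> nat" where
  "corner_count \<alpha> \<sigma> v r = card {h \<in> v. face \<alpha> \<sigma> h = r}"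

definition game_version :: "'d set \<Rightarrow> ('d \<Rightarrow> 'd) \<Rightarrow> ('d \<Rightarrow> 'd) \<Rightarrow> enat \<Rightarrow>
    ('d set \<Rightarrow> 'd set \<Rightarrow> int) \<Rightarrow> bool" where
  "game_version H \<alpha> \<sigma> k a \<longleftrightarrow>
     (\<forall>v\<in>vertices H \<sigma>.
        (k \<noteq> \<infinity> \<and> irreducible_vertex \<alpha> \<sigma> v \<longrightarrow>
           (\<forall>r\<in>vertex_regions H \<alpha> \<sigma> v. \<forall>r'\<in>vertex_regions H \<alpha> \<sigma> v.
              [a v r = a v r'] (mod zk k))) \<and>
        (\<forall>r\<in>vertex_regions H \<alpha> \<sigma> v.
           irreducible_vertex \<alpha> \<sigma> v \<or> corner_count \<alpha> \<sigma> v r = 1 \<longrightarrow>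
             (if k = \<infinity> then [a v r = 1] (mod zk k) else non_zero_divisor (zk k) (a v r))))"

definition game_apply :: "'d set \<Rightarrow> ('d \<Rightarrow> 'd) \<Rightarrow> ('d \<Rightarrow> 'd) \<Rightarrow>
    ('d set \<Rightarrow> 'd set \<Rightarrow> int) \<Rightarrow> ('d set \<Rightarrow> int) \<Rightarrow> 'd set \<Rightarrow> int" where
  "game_apply H \<alpha> \<sigma> a l v = (\<Sum>r\<in>vertex_regions H \<alpha> \<sigma> v. a v r * l r)"

definition null_pattern :: "'d set \<Rightarrow> ('d \<Rightarrow> 'd) \<Rightarrow> ('d \<Rightarrow> 'd) \<Rightarrow> enat \<Rightarrow>
    ('d set \<Rightarrow> 'd set \<Rightarrow> int) \<Rightarrow> ('d set \<Rightarrow> int) \<Rightarrow> bool" where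
  "null_pattern H \<alpha> \<sigma> k a l \<longleftrightarrow>
     (\<forall>v\<in>vertices H \<sigma>. [game_apply H \<alpha> \<sigma> a l v = 0] (mod zk k))"

definition push_number :: "('d \<Rightarrow> 'd) \<Rightarrow> ('d \<Rightarrow> 'd) \<Rightarrow> ('d set \<Rightarrow> int) \<Rightarrow> 'd set \<Rightarrow> int" where
  "push_number \<alpha> \<sigma> l e =
     (let g = (SOME g. g \<in> e) in l (face \<alpha> \<sigma> g) + l (face \<alpha> \<sigma> (inv \<sigma> g)))"

end

theory Submission
  imports Defs
begin

text \<open>
  The push number of an edge is \<open>dart_push g\<close> for either dart \<open>g\<close> of it: the pattern summed
  over the two regions beside \<open>g\<close>. At an irreducible vertex all increments equal one
  non-zero-divisor, so a null pattern sums to \<open>0\<close> over the four regions around the vertex;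
  these are exactly the regions beside two opposite darts, hence opposite edges at a crossing
  have opposite push numbers. Walking along a strand (to the other end of the edge, then
  straight through the crossing) therefore alternates the sign. A knot is traversed by two
  strands, starting at the two ends \<open>h\<^sub>0\<close>, \<open>\<alpha> h\<^sub>0\<close> of one edge, so every push number is
  \<open>\<plusminus>dart_push h\<^sub>0\<close>. Edges at a common vertex without a common region are opposite there,
  which gives the second claim.
\<close>

lemma card_4_distinct:
  assumes "card {a, b, c, d} = (4::nat)"
  shows "a \<noteq> b \<and> a \<noteq> c \<and> a \<noteq> d \<and> b \<noteq> c \<and> b \<noteq> d \<and> c \<noteq> d"
proof -
  have "card {a, b, c, d} \<le> 4 - (if a = b \<or> a = c \<or> a = d \<or> b = c \<or> b = d \<or> c = d then 1 else 0)"
    by (auto simp: card_insert_if insert_commute)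
  then show ?thesis
    using assms by (auto split: if_splits)
qed

lemma orbit_eq_if_funpow_4_fixed:
  assumes "(f ^^ 4) x = x"
  shows "orbit f x = {x, f x, f (f x), f (f (f x))}"
proof -
  have "orbit f x = (\<lambda>m. (f ^^ m) x) ` {..<4}"
    using orbit_altdef_bounded[OF assms] by auto
  also have "{..<4::nat} = {0, 1, 2, 3}"
    by auto
  finally show ?thesis
    by (simp add: numeral_eq_Suc)
qed

lemma permutation_orbit_eq:
  assumes "permutation f" "y \<in> orbit f x"
  shows "orbit f y = orbit f x"
  using assms cyclic_on_orbit' orbit_cyclic_eq3 by metis

lemma cong_add_eq_0_iff:
  fixes x y s m :: int
  assumes "[x + y = 0] (mod m)"
  shows "[x = s] (mod m) \<longleftrightarrow> [y = - s] (mod m)"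
proof -
  have "[y = - x] (mod m)"
    using assms cong_add_lcancel[of x y "- x" m] by simp
  then show ?thesis
    by (metis cong_minus_minus_iff cong_sym cong_trans minus_minus)
qed

lemma iterate_cong_plus_minus:
  fixes p :: "'a \<Rightarrow> int"
  assumes closed: "\<And>y. y \<in> A \<Longrightarrow> f y \<in> A"
    and alternating: "\<And>y. y \<in> A \<Longrightarrow> [p (f y) = - p y] (mod m)"
    and "x \<in> A"
  shows "[p ((f ^^ n) x) = p x] (mod m) \<or> [p ((f ^^ n) x) = - p x] (mod m)"
proof (induction n)
  case 0
  then show ?case by simp
next
  case (Suc n)
  have "(f ^^ n) x \<in> A"
    using \<open>x \<in> A\<close> closed by (induction n) auto
  then have "[p ((f ^^ Suc n) x) = - p ((f ^^ n) x)] (mod m)"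
    using alternating by simp
  with Suc.IH show ?case
    by (metis cong_minus_minus_iff cong_trans minus_minus)
qed

text \<open>
  If \<open>(\<beta> \<circ> \<alpha>)\<^sup>n h = \<alpha> h\<close>, then \<open>\<alpha>\<close> reflects the path \<open>h, (\<beta> \<circ> \<alpha>) h, \<dots>, (\<beta> \<circ> \<alpha>)\<^sup>n h\<close>;
  the middle of the reflection is a fixed point of \<open>\<alpha>\<close> (\<open>n\<close> even) or of \<open>\<beta>\<close> (\<open>n\<close> odd).
\<close>
lemma involutions_iterate_neq:
  assumes \<alpha>: "\<And>x. x \<in> H \<Longrightarrow> \<alpha> x \<in> H \<and> \<alpha> (\<alpha> x) = x \<and> \<alpha> x \<noteq> x"
    and \<beta>: "\<And>x. x \<in> H \<Longrightarrow> \<beta> x \<in> H \<and> \<beta> (\<beta> x) = x \<and> \<beta> x \<noteq> x"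
    and "h \<in> H"
  shows "((\<beta> \<circ> \<alpha>) ^^ n) h \<noteq> \<alpha> h"
proof
  define \<tau> where "\<tau> = \<beta> \<circ> \<alpha>"
  have in_H: "(\<tau> ^^ j) h \<in> H" for j
    using \<open>h \<in> H\<close> \<alpha> \<beta> by (induction j) (auto simp: \<tau>_def)
  assume "((\<beta> \<circ> \<alpha>) ^^ n) h = \<alpha> h"
  then have n: "(\<tau> ^^ n) h = \<alpha> h"
    by (simp add: \<tau>_def)
  have reflect: "\<alpha> ((\<tau> ^^ j) h) = (\<tau> ^^ (n - j)) h" if "j \<le> n" for j
    using that
  proof (induction j)
    case 0
    then show ?case using n \<alpha> \<open>h \<in> H\<close> by simp
  next
    case (Suc j)
    then obtain q where q: "n - j = Suc q" "n - Suc j = q"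
      by (metis Suc_diff_Suc Suc_le_lessD)
    have "\<alpha> ((\<tau> ^^ Suc j) h) = \<alpha> (\<beta> (\<alpha> ((\<tau> ^^ j) h)))"
      by (simp add: \<tau>_def)
    also have "\<dots> = \<alpha> (\<beta> ((\<tau> ^^ (n - j)) h))"
      using Suc by simp
    also have "\<dots> = (\<tau> ^^ q) h"
      using \<alpha> \<beta> in_H[of q] by (simp add: q(1) \<tau>_def)
    finally show ?case
      using q(2) by simp
  qed
  show False
  proof (cases "even n")
    case True
    then obtain j where "n = 2 * j"
      by blast
    then have "\<alpha> ((\<tau> ^^ j) h) = (\<tau> ^^ j) h"
      using reflect[of j] by simp
    then show False
      using \<alpha> in_H by blast
  next
    case False
    then obtain j where "n = 2 * j + 1"
      using oddE by blast
    then have "\<alpha> ((\<tau> ^^ j) h) = \<beta> (\<alpha> ((\<tau> ^^ j) h))"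
      using reflect[of j] by (simp add: \<tau>_def)
    then show False
      using \<alpha> \<beta> in_H by metis
  qed
qed

lemma game_version_irreducible_increment:
  assumes "game_version H \<alpha> \<sigma> k a" "v \<in> vertices H \<sigma>" "irreducible_vertex \<alpha> \<sigma> v"
  obtains c where "non_zero_divisor (zk k) c"
    and "\<And>r. r \<in> vertex_regions H \<alpha> \<sigma> v \<Longrightarrow> [a v r = c] (mod zk k)"
proof (cases "k = \<infinity> \<or> vertex_regions H \<alpha> \<sigma> v = {}")
  case True
  then show ?thesis
    using assms by (intro that[of 1]) (auto simp: game_version_def non_zero_divisor_def)
next
  case False
  then obtain r\<^sub>0 where "r\<^sub>0 \<in> vertex_regions H \<alpha> \<sigma> v"
    by blast
  with False show ?thesis
    using assms by (intro that[of "a v r\<^sub>0"]) (auto simp: game_version_def)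
qed

lemma null_pattern_irreducible_vertex_sum:
  assumes "game_version H \<alpha> \<sigma> k a" "null_pattern H \<alpha> \<sigma> k a l"
    and "v \<in> vertices H \<sigma>" "irreducible_vertex \<alpha> \<sigma> v"
  shows "[(\<Sum>r\<in>vertex_regions H \<alpha> \<sigma> v. l r) = 0] (mod zk k)"
proof -
  obtain c where c: "non_zero_divisor (zk k) c"
    and increment: "\<And>r. r \<in> vertex_regions H \<alpha> \<sigma> v \<Longrightarrow> [a v r = c] (mod zk k)"
    using game_version_irreducible_increment[OF assms(1,3,4)] by blast
  have "[game_apply H \<alpha> \<sigma> a l v = (\<Sum>r\<in>vertex_regions H \<alpha> \<sigma> v. c * l r)] (mod zk k)"
    unfolding game_apply_def using increment by (intro cong_sum cong_mult cong_refl)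
  moreover have "[game_apply H \<alpha> \<sigma> a l v = 0] (mod zk k)"
    using assms(2,3) by (simp add: null_pattern_def)
  ultimately have "[c * (\<Sum>r\<in>vertex_regions H \<alpha> \<sigma> v. l r) = 0] (mod zk k)"
    by (metis cong_sym cong_trans sum_distrib_left)
  with c show ?thesis
    by (simp add: non_zero_divisor_def)
qed

definition dart_push :: "('d \<Rightarrow> 'd) \<Rightarrow> ('d \<Rightarrow> 'd) \<Rightarrow> ('d set \<Rightarrow> int) \<Rightarrow> 'd \<Rightarrow> int" where
  "dart_push \<alpha> \<sigma> l g = l (face \<alpha> \<sigma> g) + l (face \<alpha> \<sigma> (inv \<sigma> g))"

locale four_valent_map =
  fixes H :: "'d set" and \<alpha> \<sigma> :: "'d \<Rightarrow> 'd"
  assumes finite_darts: "finite H"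
    and alpha_permutes: "\<alpha> permutes H"
    and sigma_permutes: "\<sigma> permutes H"
    and alpha_involution: "\<And>h. h \<in> H \<Longrightarrow> \<alpha> (\<alpha> h) = h"
    and alpha_no_fixpoint: "\<And>h. h \<in> H \<Longrightarrow> \<alpha> h \<noteq> h"
    and sigma_order_4: "\<And>h. h \<in> H \<Longrightarrow> \<sigma> (\<sigma> (\<sigma> (\<sigma> h))) = h"
    and sigma_sq_no_fixpoint: "\<And>h. h \<in> H \<Longrightarrow> \<sigma> (\<sigma> h) \<noteq> h"

lemma knot_diagram_four_valent_map:
  assumes "knot_diagram H \<alpha> \<sigma>"
  shows "four_valent_map H \<alpha> \<sigma>"
  using assms unfolding knot_diagram_def four_valent_map_def by (auto simp: numeral_eq_Suc)

context four_valent_map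
begin

lemma alpha_in [simp]: "h \<in> H \<Longrightarrow> \<alpha> h \<in> H"
  using alpha_permutes by (simp add: permutes_in_image)

lemma sigma_in [simp]: "h \<in> H \<Longrightarrow> \<sigma> h \<in> H"
  using sigma_permutes by (simp add: permutes_in_image)

lemma alpha_alpha [simp]: "\<alpha> (\<alpha> h) = h"
  using alpha_involution permutes_not_in[OF alpha_permutes] by (cases "h \<in> H") auto

lemma inv_sigma_sigma [simp]: "inv \<sigma> (\<sigma> h) = h"
  and sigma_inv_sigma [simp]: "\<sigma> (inv \<sigma> h) = h"
  using permutes_inverses[OF sigma_permutes] by auto

lemma inv_sigma_eq: "h \<in> H \<Longrightarrow> inv \<sigma> h = \<sigma> (\<sigma> (\<sigma> h))"
  by (metis inv_sigma_sigma sigma_order_4)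

lemma permutation_sigma: "permutation \<sigma>"
  using sigma_permutes finite_darts permutation_permutes by blast

lemma vertex_eq: "h \<in> H \<Longrightarrow> orbit \<sigma> h = {h, \<sigma> h, \<sigma> (\<sigma> h), \<sigma> (\<sigma> (\<sigma> h))}"
  by (rule orbit_eq_if_funpow_4_fixed) (simp add: numeral_eq_Suc sigma_order_4)

lemma permutation_alpha_sigma: "permutation (\<alpha> \<circ> \<sigma>)"
  using permutes_compose[OF sigma_permutes alpha_permutes] finite_darts permutation_permutes
  by blast

lemma face_eq_if_in: "y \<in> face \<alpha> \<sigma> x \<Longrightarrow> face \<alpha> \<sigma> y = face \<alpha> \<sigma> x"
  unfolding face_def using permutation_alpha_sigma by (rule permutation_orbit_eq)

lemma self_in_face: "x \<in> face \<alpha> \<sigma> x"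
  unfolding face_def using permutation_alpha_sigma by (rule permutation_self_in_orbit)

lemma face_alpha_sigma [simp]: "face \<alpha> \<sigma> (\<alpha> (\<sigma> x)) = face \<alpha> \<sigma> x"
  by (rule face_eq_if_in) (simp add: face_def orbit.base[of "\<alpha> \<circ> \<sigma>", simplified])

lemma dart_push_alpha [simp]: "dart_push \<alpha> \<sigma> l (\<alpha> g) = dart_push \<alpha> \<sigma> l g"
  using face_alpha_sigma[of "inv \<sigma> g"] face_alpha_sigma[of "inv \<sigma> (\<alpha> g)"]
  by (simp add: dart_push_def add.commute)

lemma push_number_eq_dart_push:
  assumes "e \<in> edges H \<alpha>" "x \<in> e"
  shows "push_number \<alpha> \<sigma> l e = dart_push \<alpha> \<sigma> l x"
proof -
  obtain h where e: "e = {h, \<alpha> h}"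
    using assms(1) by (auto simp: edges_def)
  have "(SOME g. g \<in> e) \<in> e"
    using assms(2) by (rule someI)
  then show ?thesis
    using assms(2) by (auto simp: e push_number_def dart_push_def[symmetric])
qed

lemma vertex_regions_orbit:
  assumes "h \<in> H"
  shows "vertex_regions H \<alpha> \<sigma> (orbit \<sigma> h) = face \<alpha> \<sigma> ` orbit \<sigma> h"
proof -
  have "orbit \<sigma> h \<subseteq> H"
    using permutes_orbit_subset[OF sigma_permutes assms] .
  then show ?thesis
    unfolding vertex_regions_def vr_incident_def regions_def
    using face_eq_if_in self_in_face by blast
qed

lemma sum_corners:
  assumes "h \<in> H" "irreducible_vertex \<alpha> \<sigma> (orbit \<sigma> h)"
  shows "(\<Sum>r\<in>face \<alpha> \<sigma> ` orbit \<sigma> h. l r) = dart_push \<alpha> \<sigma> l h + dart_push \<alpha> \<sigma> l (\<sigma> (\<sigma> h))"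
proof -
  have "card {face \<alpha> \<sigma> h, face \<alpha> \<sigma> (\<sigma> h), face \<alpha> \<sigma> (\<sigma> (\<sigma> h)), face \<alpha> \<sigma> (\<sigma> (\<sigma> (\<sigma> h)))} = 4"
    using assms by (simp add: irreducible_vertex_def vertex_eq)
  then have "face \<alpha> \<sigma> h \<noteq> face \<alpha> \<sigma> (\<sigma> h) \<and> face \<alpha> \<sigma> h \<noteq> face \<alpha> \<sigma> (\<sigma> (\<sigma> h))
      \<and> face \<alpha> \<sigma> h \<noteq> face \<alpha> \<sigma> (\<sigma> (\<sigma> (\<sigma> h)))
      \<and> face \<alpha> \<sigma> (\<sigma> h) \<noteq> face \<alpha> \<sigma> (\<sigma> (\<sigma> h))
      \<and> face \<alpha> \<sigma> (\<sigma> h) \<noteq> face \<alpha> \<sigma> (\<sigma> (\<sigma> (\<sigma> h)))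
      \<and> face \<alpha> \<sigma> (\<sigma> (\<sigma> h)) \<noteq> face \<alpha> \<sigma> (\<sigma> (\<sigma> (\<sigma> h)))"
    by (rule card_4_distinct)
  then show ?thesis
    using assms(1) by (simp add: vertex_eq dart_push_def inv_sigma_eq ac_simps)
qed

lemma opposite_corner:
  assumes "x \<in> H" "y \<in> orbit \<sigma> x"
    and "{face \<alpha> \<sigma> x, face \<alpha> \<sigma> (inv \<sigma> x)} \<inter> {face \<alpha> \<sigma> y, face \<alpha> \<sigma> (inv \<sigma> y)} = {}"
  shows "y = \<sigma> (\<sigma> x)"
proof -
  have "y = x \<or> y = \<sigma> x \<or> y = \<sigma> (\<sigma> x) \<or> y = \<sigma> (\<sigma> (\<sigma> x))"
    using assms(1,2) by (simp add: vertex_eq)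
  moreover have "face \<alpha> \<sigma> x \<noteq> face \<alpha> \<sigma> y" "face \<alpha> \<sigma> x \<noteq> face \<alpha> \<sigma> (inv \<sigma> y)"
    "face \<alpha> \<sigma> (inv \<sigma> x) \<noteq> face \<alpha> \<sigma> y"
    using assms(3) by auto
  ultimately show ?thesis
    using assms(1) by (auto simp: inv_sigma_eq)
qed

lemma permutation_strand_step: "permutation (\<sigma> \<circ> \<sigma> \<circ> \<alpha>)"
  using permutes_compose[OF alpha_permutes permutes_compose[OF sigma_permutes sigma_permutes]]
    finite_darts permutation_permutes by blast

lemma alpha_notin_strand:
  assumes "h \<in> H"
  shows "\<alpha> h \<notin> orbit (\<sigma> \<circ> \<sigma> \<circ> \<alpha>) h"
proof
  assume "\<alpha> h \<in> orbit (\<sigma> \<circ> \<sigma> \<circ> \<alpha>) h"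
  then obtain n where "((\<sigma> \<circ> \<sigma> \<circ> \<alpha>) ^^ n) h = \<alpha> h"
    by (auto simp: orbit_altdef_permutation[OF permutation_strand_step])
  moreover have "((\<sigma> \<circ> \<sigma> \<circ> \<alpha>) ^^ n) h \<noteq> \<alpha> h"
    by (rule involutions_iterate_neq[of H])
      (use assms alpha_no_fixpoint sigma_sq_no_fixpoint sigma_order_4 in auto)
  ultimately show False
    by contradiction
qed

lemma two_strands_cover:
  assumes "card (strands H \<alpha> \<sigma>) = 2" "h \<in> H" "g \<in> H"
  shows "g \<in> orbit (\<sigma> \<circ> \<sigma> \<circ> \<alpha>) h \<union> orbit (\<sigma> \<circ> \<sigma> \<circ> \<alpha>) (\<alpha> h)"
proof -
  let ?strand = "orbit (\<sigma> \<circ> \<sigma> \<circ> \<alpha>)"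
  have self_in: "x \<in> ?strand x" for x
    using permutation_strand_step by (rule permutation_self_in_orbit)
  have distinct: "?strand h \<noteq> ?strand (\<alpha> h)"
    using alpha_notin_strand[OF assms(2)] self_in[of "\<alpha> h"] by metis
  obtain S\<^sub>1 S\<^sub>2 where "strands H \<alpha> \<sigma> = {S\<^sub>1, S\<^sub>2}"
    using assms(1) by (auto simp: card_2_iff)
  then have in_strands: "?strand x \<in> {S\<^sub>1, S\<^sub>2}" if "x \<in> H" for x
    using that by (auto simp: strands_def)
  have "?strand g = ?strand h \<or> ?strand g = ?strand (\<alpha> h)"
    using in_strands[OF assms(3)] in_strands[OF assms(2)] in_strands[OF alpha_in[OF assms(2)]]
      distinct by auto
  then show ?thesis
    using self_in[of g] by auto
qed

end

locale reduced_null_pattern = four_valent_map +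
  fixes k :: enat and a :: "'d set \<Rightarrow> 'd set \<Rightarrow> int" and l :: "'d set \<Rightarrow> int"
  assumes reduced: "reduced H \<alpha> \<sigma>"
    and version: "game_version H \<alpha> \<sigma> k a"
    and null: "null_pattern H \<alpha> \<sigma> k a l"
begin

lemma opposite_dart_push:
  assumes "h \<in> H"
  shows "[dart_push \<alpha> \<sigma> l h + dart_push \<alpha> \<sigma> l (\<sigma> (\<sigma> h)) = 0] (mod zk k)"
proof -
  have v: "orbit \<sigma> h \<in> vertices H \<sigma>"
    using assms by (auto simp: vertices_def)
  then have "irreducible_vertex \<alpha> \<sigma> (orbit \<sigma> h)"
    using reduced by (simp add: reduced_def)
  then show ?thesis
    using null_pattern_irreducible_vertex_sum[OF version null v] assms
    by (simp add: vertex_regions_orbit sum_corners)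
qed

lemma strand_dart_push:
  assumes "h \<in> H" "g \<in> orbit (\<sigma> \<circ> \<sigma> \<circ> \<alpha>) h"
  shows "[dart_push \<alpha> \<sigma> l g = dart_push \<alpha> \<sigma> l h] (mod zk k)
    \<or> [dart_push \<alpha> \<sigma> l g = - dart_push \<alpha> \<sigma> l h] (mod zk k)"
proof -
  have step: "[dart_push \<alpha> \<sigma> l ((\<sigma> \<circ> \<sigma> \<circ> \<alpha>) x) = - dart_push \<alpha> \<sigma> l x] (mod zk k)"
    if "x \<in> H" for x
  proof -
    have "[dart_push \<alpha> \<sigma> l x + dart_push \<alpha> \<sigma> l ((\<sigma> \<circ> \<sigma> \<circ> \<alpha>) x) = 0] (mod zk k)"
      using opposite_dart_push[of "\<alpha> x"] that by simp
    from cong_add_eq_0_iff[OF this, of "dart_push \<alpha> \<sigma> l x"] show ?thesis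
      by simp
  qed
  obtain n where "g = ((\<sigma> \<circ> \<sigma> \<circ> \<alpha>) ^^ n) h"
    using assms(2) by (auto simp: orbit_altdef_permutation[OF permutation_strand_step])
  then show ?thesis
    using iterate_cong_plus_minus[of H "\<sigma> \<circ> \<sigma> \<circ> \<alpha>" "dart_push \<alpha> \<sigma> l", OF _ step assms(1)]
    by simp
qed

lemma push_number_plus_minus:
  assumes "card (strands H \<alpha> \<sigma>) = 2" "h \<in> H" "e \<in> edges H \<alpha>"
  shows "[push_number \<alpha> \<sigma> l e = dart_push \<alpha> \<sigma> l h] (mod zk k)
    \<or> [push_number \<alpha> \<sigma> l e = - dart_push \<alpha> \<sigma> l h] (mod zk k)"
proof -
  obtain g where g: "g \<in> H" "g \<in> e"
    using assms(3) by (auto simp: edges_def)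
  then show ?thesis
    using two_strands_cover[OF assms(1,2) g(1)] strand_dart_push[of h g] strand_dart_push[of "\<alpha> h" g]
      assms(2) push_number_eq_dart_push[OF assms(3) g(2)] by auto
qed

lemma push_number_opposite_edges:
  assumes "e\<^sub>1 \<in> edges H \<alpha>" "e\<^sub>2 \<in> edges H \<alpha>"
    and "v \<in> vertices H \<sigma>" "v \<inter> e\<^sub>1 \<noteq> {}" "v \<inter> e\<^sub>2 \<noteq> {}"
    and "edge_regions \<alpha> \<sigma> e\<^sub>1 \<inter> edge_regions \<alpha> \<sigma> e\<^sub>2 = {}"
  shows "[push_number \<alpha> \<sigma> l e\<^sub>1 + push_number \<alpha> \<sigma> l e\<^sub>2 = 0] (mod zk k)"
proof -
  obtain x\<^sub>1 x\<^sub>2 where x: "x\<^sub>1 \<in> v" "x\<^sub>1 \<in> e\<^sub>1" "x\<^sub>2 \<in> v" "x\<^sub>2 \<in> e\<^sub>2"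
    using assms(4,5) by blast
  have "x\<^sub>1 \<in> H"
    using assms(1) x(2) by (auto simp: edges_def)
  obtain g where "v = orbit \<sigma> g"
    using assms(3) by (auto simp: vertices_def)
  then have "x\<^sub>2 \<in> orbit \<sigma> x\<^sub>1"
    using x(1,3) permutation_orbit_eq[OF permutation_sigma] by blast
  moreover have "{face \<alpha> \<sigma> x\<^sub>1, face \<alpha> \<sigma> (inv \<sigma> x\<^sub>1)} \<inter> {face \<alpha> \<sigma> x\<^sub>2, face \<alpha> \<sigma> (inv \<sigma> x\<^sub>2)} = {}"
    using assms(6) x(2,4) unfolding edge_regions_def by blast
  ultimately have "x\<^sub>2 = \<sigma> (\<sigma> x\<^sub>1)"
    using opposite_corner \<open>x\<^sub>1 \<in> H\<close> by blast
  then show ?thesis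
    using opposite_dart_push[OF \<open>x\<^sub>1 \<in> H\<close>] x(2,4)
      push_number_eq_dart_push[OF assms(1)] push_number_eq_dart_push[OF assms(2)] by simp
qed

end

theorem mainTheorem4:
  fixes H :: "'d set" and \<alpha> \<sigma> :: "'d \<Rightarrow> 'd" and k :: enat
    and a :: "'d set \<Rightarrow> 'd set \<Rightarrow> int" and l :: "'d set \<Rightarrow> int"
  assumes "knot_diagram H \<alpha> \<sigma>"
    and "reduced H \<alpha> \<sigma>"
    and "2 \<le> k"
    and "game_version H \<alpha> \<sigma> k a"
    and "null_pattern H \<alpha> \<sigma> k a l"
  shows "\<exists>s::int.
    (\<forall>e\<in>edges H \<alpha>. [push_number \<alpha> \<sigma> l e = s] (mod zk k) \<or> [push_number \<alpha> \<sigma> l e = - s] (mod zk k)) \<and>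
    (\<forall>e1\<in>edges H \<alpha>. \<forall>e2\<in>edges H \<alpha>.
       (\<exists>v\<in>vertices H \<sigma>. v \<inter> e1 \<noteq> {} \<and> v \<inter> e2 \<noteq> {}) \<and>
       edge_regions \<alpha> \<sigma> e1 \<inter> edge_regions \<alpha> \<sigma> e2 = {} \<longrightarrow>
       ([push_number \<alpha> \<sigma> l e1 = s] (mod zk k) \<longleftrightarrow> [push_number \<alpha> \<sigma> l e2 = - s] (mod zk k)))"
proof -
  interpret reduced_null_pattern H \<alpha> \<sigma> k a l
    using assms knot_diagram_four_valent_map
    by (simp add: reduced_null_pattern_def reduced_null_pattern_axioms_def)
  obtain h\<^sub>0 where "h\<^sub>0 \<in> H" and strands: "card (strands H \<alpha> \<sigma>) = 2"
    using assms(1) by (auto simp: knot_diagram_def)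
  show ?thesis
  proof (intro exI[of _ "dart_push \<alpha> \<sigma> l h\<^sub>0"] conjI ballI impI)
    fix e
    assume "e \<in> edges H \<alpha>"
    then show "[push_number \<alpha> \<sigma> l e = dart_push \<alpha> \<sigma> l h\<^sub>0] (mod zk k)
      \<or> [push_number \<alpha> \<sigma> l e = - dart_push \<alpha> \<sigma> l h\<^sub>0] (mod zk k)"
      using push_number_plus_minus[OF strands \<open>h\<^sub>0 \<in> H\<close>] by blast
  next
    fix e\<^sub>1 e\<^sub>2
    assume e: "e\<^sub>1 \<in> edges H \<alpha>" "e\<^sub>2 \<in> edges H \<alpha>"
      and "(\<exists>v\<in>vertices H \<sigma>. v \<inter> e\<^sub>1 \<noteq> {} \<and> v \<inter> e\<^sub>2 \<noteq> {}) \<and>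
        edge_regions \<alpha> \<sigma> e\<^sub>1 \<inter> edge_regions \<alpha> \<sigma> e\<^sub>2 = {}"
    then obtain v where "v \<in> vertices H \<sigma>" "v \<inter> e\<^sub>1 \<noteq> {}" "v \<inter> e\<^sub>2 \<noteq> {}"
      "edge_regions \<alpha> \<sigma> e\<^sub>1 \<inter> edge_regions \<alpha> \<sigma> e\<^sub>2 = {}"
      by blast
    with e have "[push_number \<alpha> \<sigma> l e\<^sub>1 + push_number \<alpha> \<sigma> l e\<^sub>2 = 0] (mod zk k)"
      by (rule push_number_opposite_edges)
    then show "[push_number \<alpha> \<sigma> l e\<^sub>1 = dart_push \<alpha> \<sigma> l h\<^sub>0] (mod zk k)
      \<longleftrightarrow> [push_number \<alpha> \<sigma> l e\<^sub>2 = - dart_push \<alpha> \<sigma> l h\<^sub>0] (mod zk k)"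
      by (rule cong_add_eq_0_iff)
  qed
qed

end
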